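(* Let $\ell\ge2$, let $\mathbf{a}=(a_1,\ldots,a_\ell)\in\mathbf{Z}^\ell$ with $\sum a_j=0$, and let $\lambda=\pi_\ell(\mathbf{a})$. Let $i$ be the largest index with $a_i=\max\{a_1,\ldots,a_\ell\}$. Then \[ \lambda_1=(a_i-1)\ell+i \] and also \[ \lambda_1=\sum_{j=1}^{i-1}(a_i-a_j)+\sum_{j=i+1}^{\ell}(a_i-a_j-1). \]
   Context: For $\mathbf{a}\in\mathbf{Z}^\ell$ with $\sum a_j=0$, let $X(\mathbf{a})=\{r\ell+(j-1):1\le j\le\ell,\ r\in\mathbf{Z},\ r\le a_j\}$ and let $\pi_\ell(\mathbf{a})$ be the partition whose nonzero parts (in weakly decreasing order) are the positive values among $\#\{y\in\mathbf{Z}\setminus X(\mathbf{a}):y<x\}$, $x\in X(\mathbf{a})$. ($\pi_\ell$ is a bijection onto the set of $\ell$-cores, i.e. partitions none of whose hook lengths is divisible by $\ell$.) $\lambda_1$ denotes the first (largest) part, taken to be $0$ for the empty partition. *)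

theory Defs
  imports Main
begin

text \<open>A vector a in Z^l is represented as a function a :: nat => int, of which only
  the values a 1, ..., a l matter.\<close>

definition Xset :: "nat \<Rightarrow> (nat \<Rightarrow> int) \<Rightarrow> int set" where
  "Xset l a = {r * int l + (int j - 1) | j r. 1 \<le> j \<and> j \<le> l \<and> r \<le> a j}"

definition gapcount :: "nat \<Rightarrow> (nat \<Rightarrow> int) \<Rightarrow> int \<Rightarrow> nat" where
  "gapcount l a x = card {y :: int. y \<notin> Xset l a \<and> y < x}"

definition pi_ell :: "nat \<Rightarrow> (nat \<Rightarrow> int) \<Rightarrow> nat list" where
  "pi_ell l a = rev (sort (map (gapcount l a)
      (sorted_list_of_set {x \<in> Xset l a. 0 < gapcount l a x})))"

definition first_part :: "nat list \<Rightarrow> nat" where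
  "first_part p = (case p of [] \<Rightarrow> 0 | q # _ \<Rightarrow> q)"

end

theory Submission
  imports Defs
begin

text \<open>Write each integer as \<open>r * l + (j - 1)\<close> with \<open>1 \<le> j \<le> l\<close> (level \<open>r\<close> on runner \<open>j\<close>
  of the \<open>l\<close>-abacus); then \<open>X(a)\<close> consists of the beads at levels \<open>r \<le> a j\<close>, and positions
  compare lexicographically by level, then runner. Hence the top bead of \<open>X(a)\<close> is
  \<open>M = a i * l + (i - 1)\<close>, and since the gap count is monotone the largest part of
  \<open>\<pi>\<^sub>l(a)\<close> is the number of gaps below \<open>M\<close>. Runner \<open>j\<close> has gaps below \<open>M\<close> exactly at the
  levels \<open>a j < r \<le> a i\<close> when \<open>j < i\<close> and \<open>a j < r < a i\<close> when \<open>j > i\<close>, which is the second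
  formula; \<open>\<Sum> a j = 0\<close> turns it into the first.\<close>

lemma residue_code_cases:
  assumes "0 < l"
  obtains j r where "1 \<le> j" "j \<le> l" "y = r * int l + (int j - 1)"
proof
  show "1 \<le> nat (y mod int l) + 1" "nat (y mod int l) + 1 \<le> l"
    using assms pos_mod_bound[of "int l" y] by linarith+
  show "y = y div int l * int l + (int (nat (y mod int l) + 1) - 1)"
    using assms by simp
qed

lemma residue_code_less_iff:
  fixes r s :: int
  assumes "1 \<le> j" "j \<le> l" "1 \<le> k" "k \<le> l"
  shows "r * int l + (int j - 1) < s * int l + (int k - 1) \<longleftrightarrow> r < s \<or> r = s \<and> j < k"
proof (cases "r < s")
  case True
  then have "r * int l + int l \<le> s * int l"
    using mult_right_mono[of "r + 1" s "int l"] by (simp add: algebra_simps)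
  then show ?thesis using True assms by linarith
next
  case False
  then have "s * int l \<le> r * int l" by (simp add: mult_right_mono)
  moreover have "s < r \<Longrightarrow> s * int l + int l \<le> r * int l"
    using mult_right_mono[of "s + 1" r "int l"] by (simp add: algebra_simps)
  ultimately show ?thesis using False assms by (cases "s < r") auto
qed

lemma residue_code_eq_iff:
  assumes "1 \<le> j" "j \<le> l" "1 \<le> k" "k \<le> l"
  shows "r * int l + (int j - 1) = s * int l + (int k - 1) \<longleftrightarrow> r = s \<and> j = k"
  using residue_code_less_iff[OF assms, of r s] residue_code_less_iff[OF assms(3,4,1,2), of s r]
  by (metis linorder_neqE_linordered_idom linorder_neqE_nat not_less_iff_gr_or_eq)

lemma residue_code_in_Xset_iff:
  assumes "1 \<le> j" "j \<le> l"
  shows "r * int l + (int j - 1) \<in> Xset l a \<longleftrightarrow> r \<le> a j"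
proof
  assume "r * int l + (int j - 1) \<in> Xset l a"
  then obtain k s where "1 \<le> k" "k \<le> l" "s \<le> a k"
    and "r * int l + (int j - 1) = s * int l + (int k - 1)"
    unfolding Xset_def by auto
  then show "r \<le> a j" using residue_code_eq_iff[OF assms] by auto
qed (use assms in \<open>auto simp: Xset_def\<close>)

lemma in_Xset_if_below_Min:
  assumes "0 < l" "y < Min (a ` {1..l}) * int l"
  shows "y \<in> Xset l a"
proof -
  obtain j r where j: "1 \<le> j" "j \<le> l" and y: "y = r * int l + (int j - 1)"
    using residue_code_cases[OF assms(1)] .
  define m where "m = Min (a ` {1..l})"
  have "r * int l + (int j - 1) < m * int l + (int 1 - 1)"
    using assms(2) y by (simp add: m_def)
  then have "r < m"
    using residue_code_less_iff[OF j, of 1 r m] assms(1) j(1) by linarith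
  also have "m \<le> a j" using j by (simp add: m_def)
  finally show ?thesis using residue_code_in_Xset_iff[OF j] y by simp
qed

lemma gaps_below_subset:
  assumes "0 < l"
  shows "{y. y \<notin> Xset l a \<and> y < x} \<subseteq> {Min (a ` {1..l}) * int l..<x}"
  using in_Xset_if_below_Min[OF assms] by force

lemma gapcount_mono:
  assumes "0 < l" "x \<le> x'"
  shows "gapcount l a x \<le> gapcount l a x'"
  unfolding gapcount_def
  by (rule card_mono[OF finite_subset[OF gaps_below_subset[OF assms(1)]]]) (use assms(2) in auto)

lemma gapcount_eq_0:
  assumes "0 < l" "x \<le> Min (a ` {1..l}) * int l"
  shows "gapcount l a x = 0"
proof -
  have "{y. y \<notin> Xset l a \<and> y < x} = {}"
    using gaps_below_subset[OF assms(1), of a x] assms(2) by auto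
  then show ?thesis by (metis card.empty gapcount_def)
qed

lemma first_part_rev_sort: "first_part (rev (sort xs)) = Max (insert 0 (set xs))"
proof (cases "rev (sort xs)")
  case Nil
  then have "xs = []" by (metis Nil_is_rev_conv length_0_conv length_sort)
  then show ?thesis by (simp add: first_part_def)
next
  case (Cons q qs)
  then have "sort xs = rev qs @ [q]" by (metis rev_rev_ident rev.simps(2))
  moreover have "set xs = set (sort xs)" by simp
  ultimately have "q \<in> set xs" "\<forall>y\<in>set xs. y \<le> q"
    using sorted_sort[of xs] by (auto simp: sorted_append)
  then show ?thesis using Cons by (auto simp: first_part_def intro!: Max_eqI[symmetric])
qed

lemma first_part_pi_ell_eq_gapcount_top:
  assumes "0 < l" "M \<in> Xset l a" "\<And>x. x \<in> Xset l a \<Longrightarrow> x \<le> M"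
  shows "first_part (pi_ell l a) = gapcount l a M"
proof -
  define S where "S = {x \<in> Xset l a. 0 < gapcount l a x}"
  have "S \<subseteq> {Min (a ` {1..l}) * int l..M}"
  proof
    fix x assume "x \<in> S"
    then show "x \<in> {Min (a ` {1..l}) * int l..M}"
      using assms(3) gapcount_eq_0[OF assms(1), of x a] by (fastforce simp: S_def)
  qed
  then have "finite S" by (rule finite_subset) simp
  have "first_part (pi_ell l a) = Max (insert 0 (gapcount l a ` S))"
    using \<open>finite S\<close> by (simp add: pi_ell_def first_part_rev_sort S_def)
  also have "\<dots> = gapcount l a M"
  proof (rule Max_eqI)
    show "gapcount l a M \<in> insert 0 (gapcount l a ` S)"
      using assms(2) by (cases "gapcount l a M = 0") (auto simp: S_def)
  qed (use \<open>finite S\<close> assms gapcount_mono in \<open>auto simp: S_def\<close>)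
  finally show ?thesis .
qed

lemma finite_residue_gaps:
  assumes "0 < l"
  shows "finite {r. b < r \<and> r * int l + (int j - 1) < x}"
proof (rule finite_subset)
  show "{r. b < r \<and> r * int l + (int j - 1) < x} \<subseteq> {b<..\<bar>x\<bar>}"
  proof
    fix r assume r: "r \<in> {r. b < r \<and> r * int l + (int j - 1) < x}"
    have "r \<le> r * int l" if "0 \<le> r" using that assms by (simp add: mult_le_cancel_left1)
    then show "r \<in> {b<..\<bar>x\<bar>}" using r by (cases "0 \<le> r") auto
  qed
qed simp

lemma gapcount_eq_sum_card_residue_gaps:
  assumes "0 < l"
  shows "gapcount l a x = (\<Sum>j = 1..l. card {r. a j < r \<and> r * int l + (int j - 1) < x})"
proof -
  let ?R = "\<lambda>j. {r. a j < r \<and> r * int l + (int j - 1) < x}"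
  have "bij_betw (\<lambda>(j, r). r * int l + (int j - 1)) (SIGMA j:{1..l}. ?R j)
      {y. y \<notin> Xset l a \<and> y < x}"
  proof (rule bij_betwI')
    fix y assume "y \<in> {y. y \<notin> Xset l a \<and> y < x}"
    moreover obtain j r where "1 \<le> j" "j \<le> l" "y = r * int l + (int j - 1)"
      using residue_code_cases[OF assms] .
    ultimately show "\<exists>p \<in> (SIGMA j:{1..l}. ?R j). y = (\<lambda>(j, r). r * int l + (int j - 1)) p"
      using residue_code_in_Xset_iff[of j l r a] by force
  qed (auto simp: residue_code_eq_iff residue_code_in_Xset_iff)
  then have "gapcount l a x = card (SIGMA j:{1..l}. ?R j)"
    unfolding gapcount_def by (simp add: bij_betw_same_card)
  also have "\<dots> = (\<Sum>j = 1..l. card (?R j))"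
    using finite_residue_gaps[OF assms] by simp
  finally show ?thesis .
qed

lemma sum_atLeastAtMost_split_at:
  fixes f :: "nat \<Rightarrow> 'a::comm_monoid_add"
  assumes "1 \<le> i" "i \<le> l"
  shows "(\<Sum>j = 1..l. f j) = (\<Sum>j = 1..i-1. f j) + f i + (\<Sum>j = i+1..l. f j)"
proof -
  have "{1..l} = {1..i-1} \<union> insert i {i+1..l}" "{1..i-1} \<inter> insert i {i+1..l} = {}"
    using assms by auto
  then show ?thesis by (simp add: sum.union_disjoint ac_simps)
qed

lemma Xset_top:
  assumes "1 \<le> i" "i \<le> l"
    and "\<forall>j\<in>{1..l}. a j \<le> a i" "\<forall>j. i < j \<and> j \<le> l \<longrightarrow> a j < a i"
  shows "a i * int l + (int i - 1) \<in> Xset l a"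
    and "x \<in> Xset l a \<Longrightarrow> x \<le> a i * int l + (int i - 1)"
proof -
  show "a i * int l + (int i - 1) \<in> Xset l a"
    using residue_code_in_Xset_iff[OF assms(1,2)] by simp
  assume "x \<in> Xset l a"
  then obtain j r where j: "1 \<le> j" "j \<le> l" and "r \<le> a j" "x = r * int l + (int j - 1)"
    unfolding Xset_def by auto
  moreover have "\<not> (a i < r \<or> a i = r \<and> i < j)"
    using \<open>r \<le> a j\<close> j assms(3,4) by force
  ultimately show "x \<le> a i * int l + (int i - 1)"
    using residue_code_less_iff[OF assms(1,2) j, of "a i" r] by (metis not_less)
qed

lemma gapcount_Xset_top:
  assumes "1 \<le> i" "i \<le> l"
    and "\<forall>j\<in>{1..l}. a j \<le> a i" "\<forall>j. i < j \<and> j \<le> l \<longrightarrow> a j < a i"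
  shows "int (gapcount l a (a i * int l + (int i - 1)))
    = (\<Sum>j = 1..i-1. a i - a j) + (\<Sum>j = i+1..l. a i - a j - 1)"
proof -
  define f where "f j = (if j < i then a i - a j else if j = i then 0 else a i - a j - 1)" for j
  have card_gaps: "int (card {r. a j < r \<and> r * int l + (int j - 1) < a i * int l + (int i - 1)})
      = f j" if j: "1 \<le> j" "j \<le> l" for j
  proof -
    have "{r. a j < r \<and> r * int l + (int j - 1) < a i * int l + (int i - 1)}
        = {a j<..(if j < i then a i else a i - 1)}"
      using residue_code_less_iff[OF j assms(1,2)] by auto
    then show ?thesis using assms(3,4) j by (auto simp: f_def)
  qed
  have "int (gapcount l a (a i * int l + (int i - 1)))
      = (\<Sum>j = 1..l. int (card {r. a j < r \<and> r * int l + (int j - 1) < a i * int l + (int i - 1)}))"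
    using assms(1,2) by (simp only: gapcount_eq_sum_card_residue_gaps[of l] of_nat_sum)
  also have "\<dots> = (\<Sum>j = 1..l. f j)"
    by (intro sum.cong refl card_gaps) auto
  also have "\<dots> = (\<Sum>j = 1..i-1. f j) + f i + (\<Sum>j = i+1..l. f j)"
    using sum_atLeastAtMost_split_at[OF assms(1,2)] .
  also have "\<dots> = (\<Sum>j = 1..i-1. a i - a j) + (\<Sum>j = i+1..l. a i - a j - 1)"
  proof -
    have "(\<Sum>j = 1..i-1. f j) = (\<Sum>j = 1..i-1. a i - a j)"
      by (rule sum.cong) (auto simp: f_def)
    moreover have "(\<Sum>j = i+1..l. f j) = (\<Sum>j = i+1..l. a i - a j - 1)"
      by (rule sum.cong) (auto simp: f_def)
    ultimately show ?thesis by (simp add: f_def)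
  qed
  finally show ?thesis .
qed

lemma gap_sum_eq_of_sum_zero:
  fixes a :: "nat \<Rightarrow> int"
  assumes "(\<Sum>j = 1..l. a j) = 0" "1 \<le> i" "i \<le> l"
  shows "(\<Sum>j = 1..i-1. a i - a j) + (\<Sum>j = i+1..l. a i - a j - 1) = (a i - 1) * int l + int i"
proof -
  have "(\<Sum>j = 1..l. a i - a j) = int l * a i"
    using assms(1) by (simp add: sum_subtractf)
  moreover have "(\<Sum>j = i+1..l. a i - a j - 1) = (\<Sum>j = i+1..l. a i - a j) - (int l - int i)"
    using assms(3) by (simp add: sum_subtractf)
  ultimately show ?thesis
    using sum_atLeastAtMost_split_at[OF assms(2,3), of "\<lambda>j. a i - a j"] by (simp add: algebra_simps)
qed

theorem mainTheorem7:
  fixes l i :: nat and a :: "nat \<Rightarrow> int"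
  assumes "l \<ge> 2"
    and "(\<Sum>j = 1..l. a j) = 0"
    and "1 \<le> i" and "i \<le> l"
    and "a i = Max (a ` {1..l})"
    and "\<forall>j. i < j \<and> j \<le> l \<longrightarrow> a j < a i"
  shows "int (first_part (pi_ell l a)) = (a i - 1) * int l + int i
       \<and> int (first_part (pi_ell l a)) =
           (\<Sum>j = 1..i-1. a i - a j) + (\<Sum>j = i+1..l. a i - a j - 1)"
proof -
  have max: "\<forall>j\<in>{1..l}. a j \<le> a i" using assms(5) by simp
  note top = Xset_top[OF assms(3,4) max assms(6)]
  have "first_part (pi_ell l a) = gapcount l a (a i * int l + (int i - 1))"
    using assms(1) top by (intro first_part_pi_ell_eq_gapcount_top) auto
  then have "int (first_part (pi_ell l a))
      = (\<Sum>j = 1..i-1. a i - a j) + (\<Sum>j = i+1..l. a i - a j - 1)"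
    using gapcount_Xset_top[OF assms(3,4) max assms(6)] by simp
  then show ?thesis using gap_sum_eq_of_sum_zero[OF assms(2,3,4)] by simp
qed

end
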